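(* Let $\Lambda:\mathbb{R}\to[0,1]$ be a right-continuous decreasing function and define $T_\Lambda:\mathbb{R}\times\mathbb{R}\times L^\infty\to(-\infty,\infty]$ by $$T_\Lambda(a,x,X)=\mathbb E\left[a+\frac{1}{1-\Lambda(x)}(X-a)_+\right]\vee x.$$ Then $$\mathrm{ES}_\Lambda(X)=\min_{(a,x)\in\mathbb{R}^2}T_\Lambda(a,x,X),\quad X\in L^\infty,$$ where the minimum is attained at $x^*=\mathrm{ES}_\Lambda(X)$ and any $a^*\in[\mathrm{VaR}_{\Lambda(x^* )}(X),\mathrm{VaR}^+_{\Lambda(x^* )}(X)]$ if $\Lambda(x^* )\in[0,1)$, or $a^*=\mathrm{VaR}_1(X)$ if $\Lambda(x^* )=1$. Moreover: (i) $T_\Lambda(a,x,X)$ is jointly convex in $(a,X)\in\mathbb{R}\times L^\infty$ for every $x\in\mathbb{R}$; (ii) $T_\Lambda(a,x,X)$ is convex in $x\in\mathbb{R}$ for all $(a,X)\in\mathbb{R}\times L^\infty$ if and only if $x\mapsto1/(1-\Lambda(x))$ is convex; (iii) the following are equivalent: (a) $T_\Lambda$ is jointly convex in $(a,x)\in\mathbb{R}^2$ for all $X\in L^\infty$; (b) $T_\Lambda$ is jointly quasi-convex in $(a,x)\in\mathbb{R}^2$ for all $X\in L^\infty$; (c) $T_\Lambda$ is jointly convex in $(a,x,X)\in\mathbb{R}\times\mathbb{R}\times L^\infty$; (d) $T_\Lambda$ is jointly quasi-convex in $(a,x,X)\in\mathbb{R}\times\mathbb{R}\times L^\infty$; (e)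 $\Lambda$ is constant on $\mathbb{R}$.
   Context: $(\Omega,\mathcal F,\mathbb P)$ is an atomless probability space, $L^0$ all random variables, $L^\infty$ essentially bounded ones; "decreasing" is weak; $\wedge=\min$, $\vee=\max$, $y_+=\max\{y,0\}$. In $\frac{1}{1-\Lambda(x)}\mathbb E[(X-a)_+]$ the conventions $0/0=0$ and $c/0=\infty$ for $c>0$ are used. For $\alpha\in[0,1]$, $X\in L^0$: $\mathrm{VaR}_\alpha(X)=\inf\{x\in\mathbb{R}:\mathbb P(X\le x)\ge\alpha\}$, $\mathrm{VaR}^+_\alpha(X)=\inf\{x\in\mathbb{R}:\mathbb P(X\le x)>\alpha\}$. For $X\in L^\infty$: $\mathrm{ES}_\alpha(X)=\frac{1}{1-\alpha}\int_\alpha^1\mathrm{VaR}_\beta(X)\,\mathrm d\beta$ for $\alpha<1$, $\mathrm{ES}_1(X)=\mathrm{VaR}_1(X)$; for decreasing $\Lambda:\mathbb{R}\to[0,1]$, $\mathrm{ES}_\Lambda(X)=\sup_{x\in\mathbb{R}}\left(\mathrm{ES}_{\Lambda(x)}(X)\wedge x\right)$. *)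

theory Defs
  imports "HOL-Probability.Probability"
begin

definition atomless :: "'a measure \<Rightarrow> bool" where
  "atomless M \<longleftrightarrow> (\<forall>A\<in>sets M. measure M A > 0 \<longrightarrow>
      (\<exists>B\<in>sets M. B \<subseteq> A \<and> 0 < measure M B \<and> measure M B < measure M A))"

definition Linf :: "'a measure \<Rightarrow> ('a \<Rightarrow> real) set" where
  "Linf M = {X. X \<in> borel_measurable M \<and> (\<exists>C. AE \<omega> in M. \<bar>X \<omega>\<bar> \<le> C)}"

text \<open>Value-at-Risk (left and right quantiles), with values in the extended reals
  (inf of the empty set is \<infinity>, of an unbounded-below set is -\<infinity>).\<close>
definition VaR :: "'a measure \<Rightarrow> ('a \<Rightarrow> real) \<Rightarrow> real \<Rightarrow> ereal" where
  "VaR M X \<alpha> = Inf {ereal x | x. measure M {\<omega>\<in>space M. X \<omega> \<le> x} \<ge> \<alpha>}"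

definition VaRp :: "'a measure \<Rightarrow> ('a \<Rightarrow> real) \<Rightarrow> real \<Rightarrow> ereal" where
  "VaRp M X \<alpha> = Inf {ereal x | x. measure M {\<omega>\<in>space M. X \<omega> \<le> x} > \<alpha>}"

definition ES :: "'a measure \<Rightarrow> real \<Rightarrow> ('a \<Rightarrow> real) \<Rightarrow> real" where
  "ES M \<alpha> X = (if \<alpha> < 1
     then (1 / (1 - \<alpha>)) * (LBINT \<beta>:{\<alpha>..1}. real_of_ereal (VaR M X \<beta>))
     else real_of_ereal (VaR M X 1))"

definition ES_Lambda :: "'a measure \<Rightarrow> (real \<Rightarrow> real) \<Rightarrow> ('a \<Rightarrow> real) \<Rightarrow> real" where
  "ES_Lambda M \<Lambda> X = (SUP x. min (ES M (\<Lambda> x) X) x)"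

text \<open>T_Lambda(a,x,X) = (a + E[(X-a)_+]/(1-\<Lambda>(x))) \<or> x, with 0/0 = 0 and c/0 = \<infinity>.\<close>
definition T_Lambda :: "'a measure \<Rightarrow> (real \<Rightarrow> real) \<Rightarrow> real \<Rightarrow> real \<Rightarrow> ('a \<Rightarrow> real) \<Rightarrow> ereal" where
  "T_Lambda M \<Lambda> a x X =
     (let e = (\<integral>\<omega>. max (X \<omega> - a) 0 \<partial>M) in
      max (ereal a + (if \<Lambda> x < 1 then ereal (e / (1 - \<Lambda> x))
                      else if e = 0 then 0 else \<infinity>))
          (ereal x))"

definition inv_one_minus :: "(real \<Rightarrow> real) \<Rightarrow> real \<Rightarrow> ereal" where
  "inv_one_minus \<Lambda> x = (if \<Lambda> x < 1 then ereal (1 / (1 - \<Lambda> x)) else \<infinity>)"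

definition ereal_convex :: "(real \<Rightarrow> ereal) \<Rightarrow> bool" where
  "ereal_convex f \<longleftrightarrow> (\<forall>x y t. 0 < t \<and> t < 1 \<longrightarrow>
      f (t * x + (1 - t) * y) \<le> ereal t * f x + ereal (1 - t) * f y)"

end

theory Submission
  imports Defs
begin

text \<open>
  With the stop-loss transform \<open>\<pi>(a) = E[(X - a)\<^sub>+]\<close> and \<open>g = 1/(1 - \<Lambda>)\<close> one has
  \<open>T\<^sub>\<Lambda>(a, x, X) = max (a + \<pi>(a) g(x)) x\<close>. Representing \<open>X\<close> by its quantile function on
  \<open>(0, 1]\<close>, the Rockafellar--Uryasev identity gives \<open>ES\<^sub>\<alpha>(X) \<le> a + \<pi>(a)/(1 - \<alpha>)\<close>, with
  equality for \<open>a\<close> between \<open>VaR\<^sub>\<alpha>\<close> and \<open>VaR\<^sup>+\<^sub>\<alpha>\<close>. Since \<open>\<Lambda>\<close> is decreasing, every term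
  \<open>min (ES\<^bsub>\<Lambda>(y)\<^esub>(X)) y\<close> of the supremum defining \<open>ES\<^sub>\<Lambda>(X)\<close> lies below \<open>T\<^sub>\<Lambda>(a, x, X)\<close>;
  conversely, at \<open>x\<^sup>* = ES\<^sub>\<Lambda>(X)\<close> right-continuity of \<open>\<Lambda>\<close> forces \<open>ES\<^bsub>\<Lambda>(x\<^sup>*)\<^esub>(X) \<le> x\<^sup>*\<close>,
  so the minimising \<open>a\<close> gives \<open>T\<^sub>\<Lambda>(a, x\<^sup>*, X) = x\<^sup>*\<close>.

  For the convexity statements: \<open>\<pi>\<close> is jointly convex in \<open>(a, X)\<close>, so \<open>T\<^sub>\<Lambda>\<close> is jointly convex
  wherever \<open>\<Lambda>\<close> is constant; constant random variables turn convexity in \<open>x\<close> into convexity of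
  \<open>g\<close>, and, when \<open>\<Lambda>\<close> is not constant, produce a violation of quasi-convexity in \<open>(a, x)\<close>.
\<close>

section \<open>Stop-loss transform and quantile levels\<close>

definition stop_loss :: "'a measure \<Rightarrow> ('a \<Rightarrow> real) \<Rightarrow> real \<Rightarrow> real" where
  "stop_loss M X a = (\<integral>\<omega>. max (X \<omega> - a) 0 \<partial>M)"

lemma stop_loss_nonneg: "0 \<le> stop_loss M X a"
  unfolding stop_loss_def by (rule integral_nonneg_AE) auto

text \<open>In \<open>ereal\<close>, \<open>0 * \<infinity> = 0\<close>: this is the convention \<open>0/0 = 0\<close>, \<open>c/0 = \<infinity>\<close> built into
  \<open>T_Lambda\<close>.\<close>

lemma T_Lambda_eq_max:
  "T_Lambda M \<Lambda> a x X = max (ereal a + ereal (stop_loss M X a) * inv_one_minus \<Lambda> x) (ereal x)"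
  using stop_loss_nonneg[of M X a]
  by (cases "\<Lambda> x < 1") (auto simp: T_Lambda_def inv_one_minus_def Let_def stop_loss_def[symmetric])

lemma T_Lambda_ge_x: "ereal x \<le> T_Lambda M \<Lambda> a x X"
  by (simp add: T_Lambda_eq_max)

lemma inv_one_minus_nonneg: "0 \<le> inv_one_minus \<Lambda> x"
  by (simp add: inv_one_minus_def)

lemma inv_one_minus_mono: "\<Lambda> y \<le> \<Lambda> x \<Longrightarrow> inv_one_minus \<Lambda> y \<le> inv_one_minus \<Lambda> x"
  by (auto simp: inv_one_minus_def intro!: divide_left_mono)

lemma VaR_mono: "\<beta> \<le> \<beta>' \<Longrightarrow> VaR M X \<beta> \<le> VaR M X \<beta>'"
  unfolding VaR_def by (rule Inf_superset_mono) auto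

lemma VaR_le_VaRp: "VaR M X \<beta> \<le> VaRp M X \<beta>"
  unfolding VaR_def VaRp_def by (rule Inf_superset_mono) auto

lemma VaRp_le_VaR: "\<alpha> < \<beta> \<Longrightarrow> VaRp M X \<alpha> \<le> VaR M X \<beta>"
  unfolding VaR_def VaRp_def by (rule Inf_superset_mono) auto

section \<open>Quantile representation of a bounded random variable\<close>

lemma set_integrable_bounded:
  fixes f :: "real \<Rightarrow> real"
  assumes [measurable]: "f \<in> borel_measurable borel" "A \<in> sets borel"
    and bound: "\<And>x. \<bar>f x\<bar> \<le> B" and sub: "A \<subseteq> {a..b}"
  shows "set_integrable lborel A f"
  unfolding set_integrable_def
proof (rule integrableI_bounded_set_indicator[where B=B])
  have "emeasure lborel A \<le> emeasure lborel {a..b}" by (rule emeasure_mono[OF sub]) simp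
  moreover have "emeasure lborel {a..b} < \<infinity>" by (cases "a \<le> b") auto
  ultimately show "emeasure lborel A < \<infinity>" by (simp add: le_less_trans)
qed (use bound in auto)

locale bounded_random_variable = prob_space M for M :: "'a measure" +
  fixes X :: "'a \<Rightarrow> real" and C :: real
  assumes X_measurable[measurable]: "X \<in> borel_measurable M"
    and AE_abs_le: "AE \<omega> in M. \<bar>X \<omega>\<bar> \<le> C"
begin

sublocale law: cdf_distribution "distr M borel X"
  unfolding cdf_distribution_def by (rule real_distribution_distr) simp

abbreviation F :: "real \<Rightarrow> real" where
  "F \<equiv> cdf (distr M borel X)"

lemma F_eq: "F x = measure M {\<omega>\<in>space M. X \<omega> \<le> x}"
  by (auto simp: cdf_def measure_distr vimage_def Int_def conj_commute intro!: arg_cong[where f="measure M"])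

lemma VaR_eq_Inf: "VaR M X \<beta> = Inf (ereal ` {x. \<beta> \<le> F x})"
  unfolding VaR_def F_eq by (simp add: setcompr_eq_image)

lemma VaRp_eq_Inf: "VaRp M X \<beta> = Inf (ereal ` {x. \<beta> < F x})"
  unfolding VaRp_def F_eq by (simp add: setcompr_eq_image)

lemma bound_nonneg: "0 \<le> C"
proof -
  have "AE \<omega> in M. 0 \<le> C"
    using AE_abs_le by eventually_elim auto
  then show ?thesis by simp
qed

lemma F_eq_1_iff: "F x = 1 \<longleftrightarrow> (AE \<omega> in M. X \<omega> \<le> x)"
  unfolding F_eq by (rule prob_Collect_eq_1) measurable

lemma F_eq_1: "C \<le> x \<Longrightarrow> F x = 1"
  unfolding F_eq_1_iff using AE_abs_le by eventually_elim auto

lemma F_eq_0: "x < - C \<Longrightarrow> F x = 0"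
  unfolding F_eq using AE_abs_le by (subst prob_Collect_eq_0) (auto elim!: eventually_mono)

lemma
  assumes "0 < \<beta>" "\<beta> \<le> 1"
  shows VaR_eq_ereal_Inf: "VaR M X \<beta> = ereal (Inf {x. \<beta> \<le> F x})"
    and Inf_level_set_le_iff: "Inf {x. \<beta> \<le> F x} \<le> x \<longleftrightarrow> \<beta> \<le> F x"
proof -
  let ?S = "{x. \<beta> \<le> F x}"
  have ne: "?S \<noteq> {}"
    using F_eq_1[of C] assms by (auto intro!: exI[of _ C])
  have bdd: "bdd_below ?S"
    by (rule bdd_belowI[of _ "-C"]) (metis F_eq_0 assms(1) linorder_not_less mem_Collect_eq)
  show "VaR M X \<beta> = ereal (Inf ?S)"
    unfolding VaR_eq_Inf using ereal_Inf'[OF bdd ne] by simp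
  have "\<beta> \<le> (INF s\<in>?S. F s)"
    by (rule cINF_greatest[OF ne]) auto
  also have "\<dots> = F (Inf ?S)"
    using continuous_at_Inf_mono[OF law.mono law.cont ne bdd] ..
  finally have "\<beta> \<le> F (Inf ?S)" .
  then show "Inf ?S \<le> x \<longleftrightarrow> \<beta> \<le> F x"
    using cInf_lower[OF _ bdd, of x] monoD[OF law.mono, of "Inf ?S" x] by auto
qed

definition quantile :: "real \<Rightarrow> real" where
  "quantile \<beta> = real_of_ereal (VaR M X \<beta>)"

lemma quantile_eq_Inf: "0 < \<beta> \<Longrightarrow> \<beta> \<le> 1 \<Longrightarrow> quantile \<beta> = Inf {x. \<beta> \<le> F x}"
  by (simp add: quantile_def VaR_eq_ereal_Inf)

lemma VaR_eq_quantile: "0 < \<beta> \<Longrightarrow> \<beta> \<le> 1 \<Longrightarrow> VaR M X \<beta> = ereal (quantile \<beta>)"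
  by (simp add: quantile_eq_Inf VaR_eq_ereal_Inf)

lemma quantile_le_iff: "0 < \<beta> \<Longrightarrow> \<beta> \<le> 1 \<Longrightarrow> quantile \<beta> \<le> x \<longleftrightarrow> \<beta> \<le> F x"
  by (simp add: quantile_eq_Inf Inf_level_set_le_iff)

lemma quantile_outside:
  assumes "\<beta> \<notin> {0<..1}"
  shows "quantile \<beta> = 0"
proof (cases "\<beta> \<le> 0")
  case True
  then have "{x. \<beta> \<le> F x} = UNIV"
    using law.cdf_nonneg order_trans by blast
  then have "VaR M X \<beta> = -\<infinity>"
    unfolding VaR_eq_Inf by (intro ereal_bot) (auto intro!: Inf_lower)
  then show ?thesis by (simp add: quantile_def)
next
  case False
  with assms have "1 < \<beta>" by auto
  then have "{x. \<beta> \<le> F x} = {}"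
    using law.cdf_bounded_prob by (auto simp: not_le intro: le_less_trans)
  then show ?thesis by (simp add: quantile_def VaR_eq_Inf top_ereal_def)
qed

lemma abs_quantile_le: "\<bar>quantile \<beta>\<bar> \<le> C"
proof (cases "\<beta> \<in> {0<..1}")
  case True
  then have "quantile \<beta> \<le> C"
    using quantile_le_iff F_eq_1 by simp
  moreover have "- C \<le> quantile \<beta>"
    using True quantile_le_iff[of \<beta> "quantile \<beta>"] F_eq_0[of "quantile \<beta>"] by force
  ultimately show ?thesis by simp
qed (simp add: quantile_outside bound_nonneg)

lemma quantile_mono: "0 < \<beta> \<Longrightarrow> \<beta> \<le> \<beta>' \<Longrightarrow> \<beta>' \<le> 1 \<Longrightarrow> quantile \<beta> \<le> quantile \<beta>'"
  using quantile_le_iff[of \<beta>' "quantile \<beta>'"] by (simp add: quantile_le_iff)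

lemma quantile_measurable[measurable]: "quantile \<in> borel_measurable borel"
proof (rule borel_measurable_piecewise_mono[of "{{..0}, {0<..1}, {1<..}}"])
  have "mono_on {..0} quantile" "mono_on {1<..} quantile"
    by (auto intro!: mono_onI simp: quantile_outside)
  moreover have "mono_on {0<..1} quantile"
    by (auto intro!: mono_onI quantile_mono)
  ultimately show "mono_on A quantile" if "A \<in> {{..0}, {0<..1::real}, {1<..}}" for A
    using that by blast
qed auto

text \<open>\<open>law.I\<close> is the quantile function of the library's proof of Skorokhod's theorem: under
  Lebesgue measure on \<open>(0, 1)\<close> it has the law of \<open>X\<close>.\<close>

lemma integral_eq_integral_quantile:
  fixes f :: "real \<Rightarrow> real"
  assumes [measurable]: "f \<in> borel_measurable borel"
  shows "(\<integral>\<omega>. f (X \<omega>) \<partial>M) = (LBINT \<beta>:{0<..1}. f (quantile \<beta>))"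
proof -
  let ?U = "restrict_space lborel {0<..<1::real}"
  have I_measurable: "law.I \<in> borel_measurable ?U"
    using law.measurable_CI
    by (subst measurable_cong_sets[OF sets_restrict_space_cong[OF sets_lborel] refl])
  have "(\<integral>\<omega>. f (X \<omega>) \<partial>M) = integral\<^sup>L (distr M borel X) f"
    using integral_distr[of X M borel f] by simp
  also have "\<dots> = integral\<^sup>L (distr ?U borel law.I) f"
    by (simp add: law.distr_I_eq_M)
  also have "\<dots> = (\<integral>\<beta>. f (law.I \<beta>) \<partial>?U)"
    by (rule integral_distr[OF I_measurable assms])
  also have "\<dots> = (LBINT \<beta>:{0<..<1}. f (law.I \<beta>))"
    unfolding set_lebesgue_integral_def by (rule integral_restrict_space) simp
  also have "\<dots> = (LBINT \<beta>:{0<..<1}. f (quantile \<beta>))"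
    by (rule set_lebesgue_integral_cong) (auto simp: quantile_eq_Inf)
  also have "\<dots> = (LBINT \<beta>:{0<..1}. f (quantile \<beta>))"
    by (rule set_integral_cong_set[symmetric])
       (auto simp: set_borel_measurable_def intro!: eventually_mono[OF AE_lborel_singleton[of 1]])
  finally show ?thesis .
qed

lemma set_integrable_quantile:
  fixes a c :: real
  assumes "A \<in> sets borel" "A \<subseteq> {0..1}"
  shows "set_integrable lborel A quantile"
    and "set_integrable lborel A (\<lambda>\<beta>. max (quantile \<beta> - a) 0)"
    and "set_integrable lborel A (\<lambda>\<beta>. max (a - quantile \<beta>) 0)"
    and "set_integrable lborel A (\<lambda>_. c)"
proof -
  have bound: "\<bar>max (quantile \<beta> - a) 0\<bar> \<le> C + \<bar>a\<bar>" "\<bar>max (a - quantile \<beta>) 0\<bar> \<le> C + \<bar>a\<bar>" for \<beta>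
    using abs_quantile_le[of \<beta>] by (auto simp: abs_le_iff)
  show "set_integrable lborel A quantile"
    by (rule set_integrable_bounded[where B=C]) (use assms abs_quantile_le in auto)
  show "set_integrable lborel A (\<lambda>\<beta>. max (quantile \<beta> - a) 0)"
    by (rule set_integrable_bounded[where B="C + \<bar>a\<bar>"]) (use assms bound in auto)
  show "set_integrable lborel A (\<lambda>\<beta>. max (a - quantile \<beta>) 0)"
    by (rule set_integrable_bounded[where B="C + \<bar>a\<bar>"]) (use assms bound in auto)
  show "set_integrable lborel A (\<lambda>_. c)"
    by (rule set_integrable_bounded[where B="\<bar>c\<bar>"]) (use assms in auto)
qed

section \<open>Expected shortfall: the Rockafellar--Uryasev formula and left semicontinuity\<close>

lemma stop_loss_eq_integral: "stop_loss M X a = (LBINT \<beta>:{0<..1}. max (quantile \<beta> - a) 0)"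
  unfolding stop_loss_def by (rule integral_eq_integral_quantile) simp

lemma ES_eq_tail_integral:
  assumes "0 \<le> \<alpha>" "\<alpha> < 1"
  shows "ES M \<alpha> X = (LBINT \<beta>:{\<alpha><..1}. quantile \<beta>) / (1 - \<alpha>)"
proof -
  have "(LBINT \<beta>:{\<alpha>..1}. quantile \<beta>) = (LBINT \<beta>:{\<alpha><..1}. quantile \<beta>)"
    by (rule set_integral_cong_set)
       (auto simp: set_borel_measurable_def intro!: eventually_mono[OF AE_lborel_singleton[of \<alpha>]])
  then show ?thesis
    using assms by (simp add: ES_def quantile_def[symmetric])
qed

lemma ES_1: "ES M 1 X = quantile 1"
  by (simp add: ES_def quantile_def)

text \<open>The Rockafellar--Uryasev identity on the quantile scale. The subtracted gap is nonnegative,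
  and it vanishes when \<open>a\<close> lies between \<open>VaR\<^sub>\<alpha>\<close> and \<open>VaR\<^sup>+\<^sub>\<alpha>\<close>.\<close>

lemma tail_integral_eq_stop_loss:
  assumes "0 \<le> \<alpha>" "\<alpha> \<le> 1"
  shows "(LBINT \<beta>:{\<alpha><..1}. quantile \<beta>) = (1 - \<alpha>) * a + stop_loss M X a
    - ((LBINT \<beta>:{0<..\<alpha>}. max (quantile \<beta> - a) 0) + (LBINT \<beta>:{\<alpha><..1}. max (a - quantile \<beta>) 0))"
proof -
  have "{0<..1} = {0<..\<alpha>} \<union> {\<alpha><..1}"
    using assms by auto
  then have "stop_loss M X a
      = (LBINT \<beta>:{0<..\<alpha>}. max (quantile \<beta> - a) 0) + (LBINT \<beta>:{\<alpha><..1}. max (quantile \<beta> - a) 0)"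
    unfolding stop_loss_eq_integral using assms
    by (simp only:) (rule set_integral_Un, auto intro!: set_integrable_quantile)
  moreover have "(LBINT \<beta>:{\<alpha><..1}. quantile \<beta>)
      = (LBINT \<beta>:{\<alpha><..1}. max (quantile \<beta> - a) 0 - max (a - quantile \<beta>) 0 + a)"
    by (rule set_lebesgue_integral_cong) auto
  moreover have "\<dots> = (LBINT \<beta>:{\<alpha><..1}. max (quantile \<beta> - a) 0)
      - (LBINT \<beta>:{\<alpha><..1}. max (a - quantile \<beta>) 0) + (1 - \<alpha>) * a"
  proof -
    have "set_integrable lborel {\<alpha><..1} (\<lambda>\<beta>. max (quantile \<beta> - a) 0)"
      "set_integrable lborel {\<alpha><..1} (\<lambda>\<beta>. max (a - quantile \<beta>) 0)"
      "set_integrable lborel {\<alpha><..1} (\<lambda>_. a)"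
      using assms by (auto intro!: set_integrable_quantile)
    then show ?thesis
      using assms by (simp add: set_integral_const)
  qed
  ultimately show ?thesis by simp
qed

lemma ES_le_stop_loss:
  assumes "0 \<le> \<alpha>" "\<alpha> < 1"
  shows "ES M \<alpha> X \<le> a + stop_loss M X a / (1 - \<alpha>)"
proof -
  have "0 \<le> (LBINT \<beta>:{0<..\<alpha>}. max (quantile \<beta> - a) 0)"
    "0 \<le> (LBINT \<beta>:{\<alpha><..1}. max (a - quantile \<beta>) 0)"
    by (auto simp: set_lebesgue_integral_def intro!: integral_nonneg_AE)
  then have "(LBINT \<beta>:{\<alpha><..1}. quantile \<beta>) \<le> (1 - \<alpha>) * a + stop_loss M X a"
    using tail_integral_eq_stop_loss[of \<alpha> a] assms by simp
  then have "ES M \<alpha> X \<le> ((1 - \<alpha>) * a + stop_loss M X a) / (1 - \<alpha>)"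
    using assms by (simp add: ES_eq_tail_integral divide_right_mono)
  also have "\<dots> = a + stop_loss M X a / (1 - \<alpha>)"
    using assms by (simp add: field_simps)
  finally show ?thesis .
qed

lemma ES_eq_stop_loss:
  assumes "0 \<le> \<alpha>" "\<alpha> < 1" "VaR M X \<alpha> \<le> ereal a" "ereal a \<le> VaRp M X \<alpha>"
  shows "ES M \<alpha> X = a + stop_loss M X a / (1 - \<alpha>)"
proof -
  have "(LBINT \<beta>:{0<..\<alpha>}. max (quantile \<beta> - a) 0) = (LBINT \<beta>:{0<..\<alpha>}. 0)"
  proof (rule set_lebesgue_integral_cong)
    show "\<forall>\<beta>. \<beta> \<in> {0<..\<alpha>} \<longrightarrow> max (quantile \<beta> - a) 0 = 0"
    proof (intro allI impI)
      fix \<beta> assume \<beta>: "\<beta> \<in> {0<..\<alpha>}"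
      then have "ereal (quantile \<beta>) = VaR M X \<beta>"
        using assms by (simp add: VaR_eq_quantile)
      also have "\<dots> \<le> VaR M X \<alpha>"
        using \<beta> by (simp add: VaR_mono)
      also have "\<dots> \<le> ereal a" by fact
      finally show "max (quantile \<beta> - a) 0 = 0" by simp
    qed
  qed simp
  moreover have "(LBINT \<beta>:{\<alpha><..1}. max (a - quantile \<beta>) 0) = (LBINT \<beta>:{\<alpha><..1}. 0)"
  proof (rule set_lebesgue_integral_cong)
    show "\<forall>\<beta>. \<beta> \<in> {\<alpha><..1} \<longrightarrow> max (a - quantile \<beta>) 0 = 0"
    proof (intro allI impI)
      fix \<beta> assume \<beta>: "\<beta> \<in> {\<alpha><..1}"
      have "ereal a \<le> VaRp M X \<alpha>" by fact
      also have "\<dots> \<le> VaR M X \<beta>"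
        using \<beta> by (simp add: VaRp_le_VaR)
      also have "\<dots> = ereal (quantile \<beta>)"
        using \<beta> assms by (simp add: VaR_eq_quantile)
      finally show "max (a - quantile \<beta>) 0 = 0" by simp
    qed
  qed simp
  ultimately have "(LBINT \<beta>:{\<alpha><..1}. quantile \<beta>) = (1 - \<alpha>) * a + stop_loss M X a"
    using tail_integral_eq_stop_loss[of \<alpha> a] assms by simp
  then show ?thesis
    using assms by (simp add: ES_eq_tail_integral add_divide_distrib)
qed

lemma integrable_excess: "integrable M (\<lambda>\<omega>. max (X \<omega> - a) 0)"
  by (rule integrable_const_bound[where B="C + \<bar>a\<bar>"]) (use AE_abs_le in \<open>eventually_elim, auto\<close>)

lemma stop_loss_eq_0_iff: "stop_loss M X a = 0 \<longleftrightarrow> quantile 1 \<le> a"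
proof -
  have "stop_loss M X a = 0 \<longleftrightarrow> (AE \<omega> in M. max (X \<omega> - a) 0 = 0)"
    unfolding stop_loss_def by (rule integral_nonneg_eq_0_iff_AE[OF integrable_excess]) auto
  also have "\<dots> \<longleftrightarrow> F a = 1"
    unfolding F_eq_1_iff by (intro AE_cong) auto
  also have "\<dots> \<longleftrightarrow> quantile 1 \<le> a"
    using quantile_le_iff[of 1 a] law.cdf_bounded_prob[of a] by auto
  finally show ?thesis .
qed

lemma VaRp_eq_ereal_Inf:
  assumes "0 \<le> \<alpha>" "\<alpha> < 1"
  shows "VaRp M X \<alpha> = ereal (Inf {x. \<alpha> < F x})"
proof -
  have "bdd_below {x. \<alpha> < F x}"
    by (rule bdd_belowI[of _ "-C"]) (metis F_eq_0 assms(1) linorder_not_less mem_Collect_eq)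
  moreover have "{x. \<alpha> < F x} \<noteq> {}"
    using F_eq_1[of C] assms by (auto intro!: exI[of _ C])
  ultimately show ?thesis
    unfolding VaRp_eq_Inf using ereal_Inf' by simp
qed

lemma quantile_le_ES:
  assumes "0 < \<beta>" "\<beta> < 1"
  shows "quantile \<beta> \<le> ES M \<beta> X"
proof -
  have "(LBINT \<gamma>:{\<beta><..1}. quantile \<beta>) \<le> (LBINT \<gamma>:{\<beta><..1}. quantile \<gamma>)"
    using assms by (intro set_integral_mono set_integrable_quantile quantile_mono) auto
  then show ?thesis
    using assms by (simp add: ES_eq_tail_integral set_integral_const le_divide_eq mult.commute)
qed

lemma ES_left_estimate:
  assumes "0 \<le> \<beta>" "\<beta> \<le> l" "l < 1"
  shows "(1 - l) * ES M l X - (l - \<beta>) * C \<le> (1 - \<beta>) * ES M \<beta> X"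
proof -
  have "{\<beta><..1} = {\<beta><..l} \<union> {l<..1}"
    using assms by auto
  then have "(LBINT \<gamma>:{\<beta><..1}. quantile \<gamma>) = (LBINT \<gamma>:{\<beta><..l}. quantile \<gamma>) + (LBINT \<gamma>:{l<..1}. quantile \<gamma>)"
    using assms by (simp only:) (rule set_integral_Un, auto intro!: set_integrable_quantile)
  moreover have "(LBINT \<gamma>:{\<beta><..l}. - C) \<le> (LBINT \<gamma>:{\<beta><..l}. quantile \<gamma>)"
    using assms abs_quantile_le
    by (intro set_integral_mono set_integrable_quantile) (auto simp: abs_le_iff minus_le_iff)
  moreover have "(LBINT \<gamma>:{\<beta><..l}. - C) = - (l - \<beta>) * C"
    using assms by (simp add: set_integral_const algebra_simps)
  moreover have "(1 - \<beta>) * ES M \<beta> X = (LBINT \<gamma>:{\<beta><..1}. quantile \<gamma>)"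
    and "(1 - l) * ES M l X = (LBINT \<gamma>:{l<..1}. quantile \<gamma>)"
    using assms by (simp_all add: ES_eq_tail_integral)
  ultimately show ?thesis
    by (simp add: algebra_simps)
qed

lemma quantile_tendsto_at_left:
  assumes "0 < \<beta>" "\<beta> \<le> 1"
  shows "(quantile \<longlongrightarrow> quantile \<beta>) (at_left \<beta>)"
proof -
  have near: "\<forall>\<^sub>F \<gamma> in at_left \<beta>. \<gamma> \<in> {0<..<\<beta>}"
    using eventually_at_left_real[OF assms(1)] .
  show ?thesis
  proof (rule order_tendstoI)
    fix r assume "r < quantile \<beta>"
    then have "F r < \<beta>"
      using quantile_le_iff[OF assms, of r] by simp
    with near show "\<forall>\<^sub>F \<gamma> in at_left \<beta>. r < quantile \<gamma>"
    proof (rule eventually_elim2[OF _ eventually_at_left_real])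
      show "r < quantile \<gamma>" if "\<gamma> \<in> {0<..<\<beta>}" "\<gamma> \<in> {F r<..<\<beta>}" for \<gamma>
        using that assms quantile_le_iff[of \<gamma> r] by auto
    qed
  next
    fix r assume "quantile \<beta> < r"
    from near show "\<forall>\<^sub>F \<gamma> in at_left \<beta>. quantile \<gamma> < r"
      by eventually_elim (use \<open>quantile \<beta> < r\<close> assms quantile_mono[of _ \<beta>] in force)
  qed
qed

lemma eventually_less_ES_at_left:
  assumes "0 < l" "l \<le> 1" "r < ES M l X"
  shows "\<forall>\<^sub>F \<beta> in at_left l. r < ES M \<beta> X"
proof -
  have near: "\<forall>\<^sub>F \<beta> in at_left l. \<beta> \<in> {0<..<l}"
    using eventually_at_left_real[OF assms(1)] .
  show ?thesis
  proof (cases "l = 1")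
    case True
    then have "\<forall>\<^sub>F \<beta> in at_left l. r < quantile \<beta>"
      using assms quantile_tendsto_at_left[of 1] by (simp add: ES_1 order_tendstoD(1))
    with near show ?thesis
      by eventually_elim (use True quantile_le_ES in force)
  next
    case False
    with assms have "l < 1" by simp
    define g where "g \<beta> = ((1 - l) * ES M l X - (l - \<beta>) * C) / (1 - \<beta>)" for \<beta>
    have "(g \<longlongrightarrow> g l) (at_left l)"
      unfolding g_def using \<open>l < 1\<close> by (intro tendsto_intros) auto
    moreover have "g l = ES M l X"
      using \<open>l < 1\<close> by (simp add: g_def)
    ultimately have "\<forall>\<^sub>F \<beta> in at_left l. r < g \<beta>"
      using assms(3) by (simp add: order_tendstoD(1))
    with near show ?thesis
    proof eventually_elim
      case (elim \<beta>)
      then have "g \<beta> \<le> ES M \<beta> X"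
        using ES_left_estimate[of \<beta> l] \<open>l < 1\<close> by (simp add: g_def pos_divide_le_eq mult.commute)
      with elim show ?case by simp
    qed
  qed
qed

end

section \<open>Minimisers of \<open>T_Lambda\<close>\<close>

locale ES_Lambda_setting = bounded_random_variable +
  fixes \<Lambda> :: "real \<Rightarrow> real"
  assumes Lambda_range: "\<And>x. 0 \<le> \<Lambda> x \<and> \<Lambda> x \<le> 1"
    and Lambda_antimono: "antimono \<Lambda>"
    and Lambda_right_cont: "\<And>x. continuous (at_right x) \<Lambda>"
begin

lemma ES_le_RU_objective:
  "ereal (ES M (\<Lambda> x) X) \<le> ereal a + ereal (stop_loss M X a) * inv_one_minus \<Lambda> x"
proof (cases "\<Lambda> x < 1")
  case True
  then show ?thesis
    using ES_le_stop_loss[of "\<Lambda> x" a] Lambda_range[of x] by (simp add: inv_one_minus_def)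
next
  case False
  then have "\<Lambda> x = 1"
    using Lambda_range[of x] by simp
  then show ?thesis
    using stop_loss_nonneg[of M X a] stop_loss_eq_0_iff[of a]
    by (cases "stop_loss M X a = 0") (auto simp: inv_one_minus_def ES_1)
qed

lemma RU_objective_eq_ES:
  assumes "\<Lambda> x < 1" "VaR M X (\<Lambda> x) \<le> ereal a" "ereal a \<le> VaRp M X (\<Lambda> x)"
  shows "ereal a + ereal (stop_loss M X a) * inv_one_minus \<Lambda> x = ereal (ES M (\<Lambda> x) X)"
  using assms ES_eq_stop_loss[of "\<Lambda> x" a] Lambda_range[of x] by (simp add: inv_one_minus_def)

lemma RU_objective_eq_ES_1:
  assumes "\<Lambda> x = 1"
  shows "ereal (quantile 1) + ereal (stop_loss M X (quantile 1)) * inv_one_minus \<Lambda> x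
    = ereal (ES M (\<Lambda> x) X)"
  using assms stop_loss_eq_0_iff[of "quantile 1"] by (simp add: ES_1 zero_ereal_def[symmetric])

lemma min_ES_le_T_Lambda: "ereal (min (ES M (\<Lambda> y) X) y) \<le> T_Lambda M \<Lambda> a x X"
proof (cases "y \<le> x")
  case True
  then have "ereal (min (ES M (\<Lambda> y) X) y) \<le> ereal x" by (simp add: min_le_iff_disj)
  also have "\<dots> \<le> T_Lambda M \<Lambda> a x X" by (rule T_Lambda_ge_x)
  finally show ?thesis .
next
  case False
  then have "\<Lambda> y \<le> \<Lambda> x"
    using Lambda_antimono by (simp add: antimonoD)
  have "ereal (min (ES M (\<Lambda> y) X) y) \<le> ereal (ES M (\<Lambda> y) X)" by simp
  also have "\<dots> \<le> ereal a + ereal (stop_loss M X a) * inv_one_minus \<Lambda> y"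
    by (rule ES_le_RU_objective)
  also have "\<dots> \<le> ereal a + ereal (stop_loss M X a) * inv_one_minus \<Lambda> x"
    using \<open>\<Lambda> y \<le> \<Lambda> x\<close>
    by (intro add_left_mono ereal_mult_left_mono inv_one_minus_mono) (simp_all add: stop_loss_nonneg)
  also have "\<dots> \<le> T_Lambda M \<Lambda> a x X" by (simp add: T_Lambda_eq_max)
  finally show ?thesis .
qed

lemma bdd_above_min_ES: "bdd_above (range (\<lambda>y. min (ES M (\<Lambda> y) X) y))"
proof (rule bdd_aboveI2)
  have "quantile 1 \<le> C"
    using abs_quantile_le[of 1] by simp
  then have "stop_loss M X C = 0"
    by (simp add: stop_loss_eq_0_iff)
  then have "T_Lambda M \<Lambda> C C X = ereal C"
    by (simp add: T_Lambda_eq_max zero_ereal_def[symmetric])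
  then show "min (ES M (\<Lambda> y) X) y \<le> C" for y
    using min_ES_le_T_Lambda[of y C C] by (simp add: min_le_iff_disj)
qed

lemma min_ES_le_ES_Lambda: "min (ES M (\<Lambda> y) X) y \<le> ES_Lambda M \<Lambda> X"
  unfolding ES_Lambda_def by (rule cSUP_upper[OF _ bdd_above_min_ES]) simp

lemma ES_Lambda_le_T_Lambda: "ereal (ES_Lambda M \<Lambda> X) \<le> T_Lambda M \<Lambda> a x X"
proof (cases "T_Lambda M \<Lambda> a x X")
  case (real r)
  have "ES_Lambda M \<Lambda> X \<le> r"
    unfolding ES_Lambda_def
    by (rule cSUP_least) (use min_ES_le_T_Lambda[of _ a x] real in \<open>auto simp: min_le_iff_disj\<close>)
  then show ?thesis using real by simp
next
  case MInf
  then show ?thesis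
    using T_Lambda_ge_x[of x M \<Lambda> a X] by simp
qed simp

lemma eventually_less_ES_at_right:
  assumes "r < ES M (\<Lambda> x) X"
  shows "\<forall>\<^sub>F y in at_right x. r < ES M (\<Lambda> y) X"
proof -
  have below: "\<forall>\<^sub>F y in at_right x. \<Lambda> y \<le> \<Lambda> x"
    using eventually_at_right_less by eventually_elim (simp add: antimonoD[OF Lambda_antimono])
  show ?thesis
  proof (cases "\<Lambda> x = 0")
    case True
    from below show ?thesis
      by eventually_elim (use True Lambda_range assms in \<open>metis order_antisym\<close>)
  next
    case False
    then have "0 < \<Lambda> x"
      using Lambda_range[of x] by simp
    then have "\<forall>\<^sub>F \<beta> in nhds (\<Lambda> x). \<beta> \<noteq> \<Lambda> x \<longrightarrow> \<beta> < \<Lambda> x \<longrightarrow> r < ES M \<beta> X"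
      using eventually_less_ES_at_left[of "\<Lambda> x" r] Lambda_range[of x] assms
      by (simp add: eventually_at_filter)
    moreover have "filterlim \<Lambda> (nhds (\<Lambda> x)) (at_right x)"
      using Lambda_right_cont[of x] by (simp add: continuous_within)
    ultimately have "\<forall>\<^sub>F y in at_right x. \<Lambda> y \<noteq> \<Lambda> x \<longrightarrow> \<Lambda> y < \<Lambda> x \<longrightarrow> r < ES M (\<Lambda> y) X"
      by (rule eventually_compose_filterlim)
    with below show ?thesis
      by eventually_elim (use assms in auto)
  qed
qed

text \<open>The supremum defining \<open>ES\<^sub>\<Lambda>\<close> is attained: right-continuity of \<open>\<Lambda>\<close> together with
  \<open>eventually_less_ES_at_left\<close> makes \<open>x \<mapsto> ES\<^bsub>\<Lambda>(x)\<^esub>\<close> lower semicontinuous from the right.\<close>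

lemma ES_at_ES_Lambda_le: "ES M (\<Lambda> (ES_Lambda M \<Lambda> X)) X \<le> ES_Lambda M \<Lambda> X"
proof (rule ccontr)
  let ?s = "ES_Lambda M \<Lambda> X"
  assume "\<not> ?thesis"
  then have "\<forall>\<^sub>F y in at_right ?s. ?s < ES M (\<Lambda> y) X"
    by (intro eventually_less_ES_at_right) simp
  moreover have "\<forall>\<^sub>F y in at_right ?s. ?s < y"
    by (rule eventually_at_right_less)
  ultimately have "\<forall>\<^sub>F y in at_right ?s. ?s < min (ES M (\<Lambda> y) X) y"
    by eventually_elim simp
  then obtain y where "?s < min (ES M (\<Lambda> y) X) y"
    using eventually_happens trivial_limit_at_right_real by blast
  then show False
    using min_ES_le_ES_Lambda[of y] by (simp add: min_le_iff_disj)
qed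

lemma T_Lambda_at_ES_Lambda:
  assumes "ereal a + ereal (stop_loss M X a) * inv_one_minus \<Lambda> (ES_Lambda M \<Lambda> X)
    = ereal (ES M (\<Lambda> (ES_Lambda M \<Lambda> X)) X)"
  shows "T_Lambda M \<Lambda> a (ES_Lambda M \<Lambda> X) X = ereal (ES_Lambda M \<Lambda> X)"
  using ES_at_ES_Lambda_le by (simp add: T_Lambda_eq_max assms)

end

lemma (in prob_space) bounded_random_variable_of_Linf:
  "X \<in> Linf M \<Longrightarrow> \<exists>C. bounded_random_variable M X C"
  unfolding Linf_def bounded_random_variable_def bounded_random_variable_axioms_def
  using prob_space_axioms by auto

lemma ES_Lambda_minimisation:
  assumes "prob_space M" and range: "\<And>x. 0 \<le> \<Lambda> x \<and> \<Lambda> x \<le> 1"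
    and "antimono \<Lambda>" and "\<And>x. continuous (at_right x) \<Lambda>" and "X \<in> Linf M"
  shows "(\<forall>a x. ereal (ES_Lambda M \<Lambda> X) \<le> T_Lambda M \<Lambda> a x X)
      \<and> (\<exists>a x. T_Lambda M \<Lambda> a x X = ereal (ES_Lambda M \<Lambda> X))
      \<and> (\<Lambda> (ES_Lambda M \<Lambda> X) < 1 \<longrightarrow>
           (\<forall>a. VaR M X (\<Lambda> (ES_Lambda M \<Lambda> X)) \<le> ereal a
                \<and> ereal a \<le> VaRp M X (\<Lambda> (ES_Lambda M \<Lambda> X)) \<longrightarrow>
                T_Lambda M \<Lambda> a (ES_Lambda M \<Lambda> X) X = ereal (ES_Lambda M \<Lambda> X)))
      \<and> (\<Lambda> (ES_Lambda M \<Lambda> X) = 1 \<longrightarrow>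
           T_Lambda M \<Lambda> (real_of_ereal (VaR M X 1)) (ES_Lambda M \<Lambda> X) X
             = ereal (ES_Lambda M \<Lambda> X))"
proof -
  interpret prob_space M by fact
  obtain C where "bounded_random_variable M X C"
    using bounded_random_variable_of_Linf \<open>X \<in> Linf M\<close> by blast
  then interpret ES_Lambda_setting M X C \<Lambda>
    using assms by (simp add: ES_Lambda_setting_def ES_Lambda_setting_axioms_def)
  let ?s = "ES_Lambda M \<Lambda> X"
  have at_VaR: "T_Lambda M \<Lambda> a ?s X = ereal ?s"
    if "\<Lambda> ?s < 1" "VaR M X (\<Lambda> ?s) \<le> ereal a" "ereal a \<le> VaRp M X (\<Lambda> ?s)" for a
    using that by (intro T_Lambda_at_ES_Lambda RU_objective_eq_ES)
  have at_VaR_1: "T_Lambda M \<Lambda> (real_of_ereal (VaR M X 1)) ?s X = ereal ?s" if "\<Lambda> ?s = 1"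
    unfolding quantile_def[symmetric] using that by (intro T_Lambda_at_ES_Lambda RU_objective_eq_ES_1)
  have "\<exists>a x. T_Lambda M \<Lambda> a x X = ereal ?s"
  proof (cases "\<Lambda> ?s < 1")
    case True
    then have "VaRp M X (\<Lambda> ?s) = ereal (Inf {x. \<Lambda> ?s < F x})"
      using range by (simp add: VaRp_eq_ereal_Inf)
    then show ?thesis
      using at_VaR[OF True] VaR_le_VaRp[of M X "\<Lambda> ?s"] by force
  next
    case False
    then show ?thesis
      using at_VaR_1 range[of ?s] by force
  qed
  then show ?thesis
    using ES_Lambda_le_T_Lambda at_VaR at_VaR_1 by blast
qed

section \<open>Convexity\<close>

lemma ereal_convex_comb_mono:
  fixes A A' B B' :: ereal
  assumes "A \<le> A'" "B \<le> B'" "0 \<le> t" "t \<le> 1"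
  shows "ereal t * A + ereal (1 - t) * B \<le> ereal t * A' + ereal (1 - t) * B'"
  using assms by (intro add_mono ereal_mult_left_mono) auto

lemma ereal_convex_comb_max:
  fixes A A' B B' :: ereal
  assumes "0 \<le> t" "t \<le> 1"
  shows "max (ereal t * A + ereal (1 - t) * B) (ereal t * A' + ereal (1 - t) * B')
    \<le> ereal t * max A A' + ereal (1 - t) * max B B'"
  using assms by (intro max.boundedI ereal_convex_comb_mono) auto

lemma ereal_convex_comb_le_max:
  fixes A B :: ereal
  assumes "0 \<le> t" "t \<le> 1"
  shows "ereal t * A + ereal (1 - t) * B \<le> max A B"
proof -
  have "ereal t * A + ereal (1 - t) * B \<le> ereal t * max A B + ereal (1 - t) * max A B"
    using assms by (intro ereal_convex_comb_mono) auto
  also have "\<dots> = (ereal t + ereal (1 - t)) * max A B"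
    using assms by (subst ereal_left_distrib) auto
  also have "\<dots> = max A B" by simp
  finally show ?thesis .
qed

lemma ereal_convex_comb_add:
  fixes A B :: ereal
  assumes "0 \<le> A" "0 \<le> B" "0 \<le> t" "t \<le> 1"
  shows "ereal (t * a + (1 - t) * b) + (ereal t * A + ereal (1 - t) * B)
    = ereal t * (ereal a + A) + ereal (1 - t) * (ereal b + B)"
  using assms by (cases A; cases B) (auto simp: algebra_simps)

lemma ereal_convex_ereal: "ereal_convex ereal"
  by (simp add: ereal_convex_def)

lemma ereal_convex_max:
  assumes "ereal_convex f" "ereal_convex g"
  shows "ereal_convex (\<lambda>x. max (f x) (g x))"
  unfolding ereal_convex_def
proof (intro allI impI)
  fix x y t :: real assume t: "0 < t \<and> t < 1"
  have "max (f (t * x + (1 - t) * y)) (g (t * x + (1 - t) * y))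
      \<le> max (ereal t * f x + ereal (1 - t) * f y) (ereal t * g x + ereal (1 - t) * g y)"
    using assms t unfolding ereal_convex_def by (intro max.mono) auto
  also have "\<dots> \<le> ereal t * max (f x) (g x) + ereal (1 - t) * max (f y) (g y)"
    using t by (intro ereal_convex_comb_max) auto
  finally show "max (f (t * x + (1 - t) * y)) (g (t * x + (1 - t) * y))
      \<le> ereal t * max (f x) (g x) + ereal (1 - t) * max (f y) (g y)" .
qed

lemma ereal_convex_affine:
  assumes "ereal_convex g" "\<And>x. 0 \<le> g x" "0 \<le> e"
  shows "ereal_convex (\<lambda>x. ereal a + ereal e * g x)"
  unfolding ereal_convex_def
proof (intro allI impI)
  fix x y t :: real assume t: "0 < t \<and> t < 1"
  have "ereal e * g (t * x + (1 - t) * y) \<le> ereal e * (ereal t * g x + ereal (1 - t) * g y)"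
    using assms t unfolding ereal_convex_def by (intro ereal_mult_left_mono) auto
  also have "\<dots> = ereal t * (ereal e * g x) + ereal (1 - t) * (ereal e * g y)"
    using assms t by (simp add: ereal_right_distrib mult.left_commute)
  finally have "ereal a + ereal e * g (t * x + (1 - t) * y)
      \<le> ereal a + (ereal t * (ereal e * g x) + ereal (1 - t) * (ereal e * g y))"
    by (rule add_left_mono)
  also have "\<dots> = ereal t * (ereal a + ereal e * g x) + ereal (1 - t) * (ereal a + ereal e * g y)"
  proof -
    have "t * a + (1 - t) * a = a" by (simp add: algebra_simps)
    then show ?thesis
      using ereal_convex_comb_add[of "ereal e * g x" "ereal e * g y" t a a] assms t by simp
  qed
  finally show "ereal a + ereal e * g (t * x + (1 - t) * y)
      \<le> ereal t * (ereal a + ereal e * g x) + ereal (1 - t) * (ereal a + ereal e * g y)" .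
qed

lemma T_Lambda_convex_in_x_if_inv_one_minus_convex:
  assumes "ereal_convex (inv_one_minus \<Lambda>)"
  shows "ereal_convex (\<lambda>x. T_Lambda M \<Lambda> a x X)"
  unfolding T_Lambda_eq_max
  by (intro ereal_convex_max ereal_convex_affine assms ereal_convex_ereal inv_one_minus_nonneg
      stop_loss_nonneg)

lemma strict_descent_if_not_constant:
  fixes \<Lambda> :: "real \<Rightarrow> real"
  assumes "antimono \<Lambda>" "\<not> (\<exists>c. \<forall>x. \<Lambda> x = c)"
  obtains p q where "p < q" "\<Lambda> q < \<Lambda> p"
proof -
  obtain y where "\<Lambda> y \<noteq> \<Lambda> 0"
    using assms(2) by auto
  then show ?thesis
    using that antimonoD[OF assms(1), of 0 y] antimonoD[OF assms(1), of y 0]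
    by (metis linorder_neqE_linordered_idom order_less_le)
qed

lemma exists_weight_above:
  fixes W :: ereal
  assumes "1 \<le> v" "ereal v < W"
  shows "\<exists>s. 0 < s \<and> s < 1 \<and> ereal v < ereal s + ereal (1 - s) * W"
proof (cases W)
  case (real w)
  define s where "s = (w - v) / (2 * (w - 1))"
  have "1 < w"
    using assms real by simp
  then have "0 < s" "s < 1" "s * (w - 1) = (w - v) / 2"
    using assms real by (auto simp: s_def field_simps)
  moreover have "s + (1 - s) * w = w - s * (w - 1)"
    by (simp add: algebra_simps)
  ultimately have "0 < s" "s < 1" "v < s + (1 - s) * w"
    using real assms by auto
  then show ?thesis
    using real by (intro exI[of _ s]) simp
qed (use assms in \<open>auto intro!: exI[of _ "1/2"]\<close>)

context prob_space
begin

lemma const_in_Linf: "(\<lambda>_. c) \<in> Linf M"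
  unfolding Linf_def by auto

lemma convex_comb_in_Linf:
  assumes "X1 \<in> Linf M" "X2 \<in> Linf M"
  shows "(\<lambda>\<omega>. t * X1 \<omega> + (1 - t) * X2 \<omega>) \<in> Linf M"
proof -
  obtain C1 C2 where bound: "AE \<omega> in M. \<bar>X1 \<omega>\<bar> \<le> C1" "AE \<omega> in M. \<bar>X2 \<omega>\<bar> \<le> C2"
    and [measurable]: "X1 \<in> borel_measurable M" "X2 \<in> borel_measurable M"
    using assms unfolding Linf_def by auto
  have "AE \<omega> in M. \<bar>t * X1 \<omega> + (1 - t) * X2 \<omega>\<bar> \<le> \<bar>t\<bar> * C1 + \<bar>1 - t\<bar> * C2"
    using bound
  proof eventually_elim
    case (elim \<omega>)
    have "\<bar>t * X1 \<omega> + (1 - t) * X2 \<omega>\<bar> \<le> \<bar>t\<bar> * \<bar>X1 \<omega>\<bar> + \<bar>1 - t\<bar> * \<bar>X2 \<omega>\<bar>"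
      by (metis abs_mult abs_triangle_ineq)
    also have "\<dots> \<le> \<bar>t\<bar> * C1 + \<bar>1 - t\<bar> * C2"
      using elim by (intro add_mono mult_left_mono) auto
    finally show ?case .
  qed
  then show ?thesis
    unfolding Linf_def by auto
qed

lemma stop_loss_const: "stop_loss M (\<lambda>_. c) a = max (c - a) 0"
  by (simp add: stop_loss_def prob_space)

lemma T_Lambda_const:
  "T_Lambda M \<Lambda> a x (\<lambda>_. c) = max (ereal a + ereal (max (c - a) 0) * inv_one_minus \<Lambda> x) (ereal x)"
  by (simp add: T_Lambda_eq_max stop_loss_const)

lemma integrable_excess_of_Linf: "X \<in> Linf M \<Longrightarrow> integrable M (\<lambda>\<omega>. max (X \<omega> - a) 0)"
  using bounded_random_variable_of_Linf bounded_random_variable.integrable_excess by blast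

lemma stop_loss_convex:
  assumes "X1 \<in> Linf M" "X2 \<in> Linf M" "0 \<le> t" "t \<le> 1"
  shows "stop_loss M (\<lambda>\<omega>. t * X1 \<omega> + (1 - t) * X2 \<omega>) (t * a1 + (1 - t) * a2)
    \<le> t * stop_loss M X1 a1 + (1 - t) * stop_loss M X2 a2"
proof -
  have integrable: "integrable M (\<lambda>\<omega>. max (X1 \<omega> - a1) 0)" "integrable M (\<lambda>\<omega>. max (X2 \<omega> - a2) 0)"
    "integrable M (\<lambda>\<omega>. max (t * X1 \<omega> + (1 - t) * X2 \<omega> - (t * a1 + (1 - t) * a2)) 0)"
    using assms convex_comb_in_Linf by (simp_all add: integrable_excess_of_Linf)
  have "max (t * X1 \<omega> + (1 - t) * X2 \<omega> - (t * a1 + (1 - t) * a2)) 0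
      \<le> t * max (X1 \<omega> - a1) 0 + (1 - t) * max (X2 \<omega> - a2) 0" for \<omega>
  proof -
    have "t * (X1 \<omega> - a1) \<le> t * max (X1 \<omega> - a1) 0" "(1 - t) * (X2 \<omega> - a2) \<le> (1 - t) * max (X2 \<omega> - a2) 0"
      "0 \<le> t * max (X1 \<omega> - a1) 0" "0 \<le> (1 - t) * max (X2 \<omega> - a2) 0"
      using assms by (auto intro!: mult_left_mono)
    moreover have "t * X1 \<omega> + (1 - t) * X2 \<omega> - (t * a1 + (1 - t) * a2) = t * (X1 \<omega> - a1) + (1 - t) * (X2 \<omega> - a2)"
      by (simp add: algebra_simps)
    ultimately show ?thesis
      by (intro max.boundedI) linarith+
  qed
  then have "stop_loss M (\<lambda>\<omega>. t * X1 \<omega> + (1 - t) * X2 \<omega>) (t * a1 + (1 - t) * a2)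
      \<le> (\<integral>\<omega>. t * max (X1 \<omega> - a1) 0 + (1 - t) * max (X2 \<omega> - a2) 0 \<partial>M)"
    unfolding stop_loss_def using integrable by (intro integral_mono) auto
  also have "\<dots> = t * stop_loss M X1 a1 + (1 - t) * stop_loss M X2 a2"
    using integrable by (simp add: stop_loss_def)
  finally show ?thesis .
qed

lemma T_Lambda_convex_on_level_set:
  assumes "X1 \<in> Linf M" "X2 \<in> Linf M" "0 \<le> t" "t \<le> 1"
    and "\<Lambda> (t * x1 + (1 - t) * x2) = \<Lambda> x1" "\<Lambda> x2 = \<Lambda> x1"
  shows "T_Lambda M \<Lambda> (t * a1 + (1 - t) * a2) (t * x1 + (1 - t) * x2) (\<lambda>\<omega>. t * X1 \<omega> + (1 - t) * X2 \<omega>)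
    \<le> ereal t * T_Lambda M \<Lambda> a1 x1 X1 + ereal (1 - t) * T_Lambda M \<Lambda> a2 x2 X2"
proof -
  define G where "G = inv_one_minus \<Lambda> x1"
  define E1 E2 where "E1 = stop_loss M X1 a1" and "E2 = stop_loss M X2 a2"
  define E where "E = stop_loss M (\<lambda>\<omega>. t * X1 \<omega> + (1 - t) * X2 \<omega>) (t * a1 + (1 - t) * a2)"
  have nonneg: "0 \<le> G" "0 \<le> E1" "0 \<le> E2"
    by (simp_all add: G_def E1_def E2_def inv_one_minus_nonneg stop_loss_nonneg)
  have "ereal E * G \<le> ereal (t * E1 + (1 - t) * E2) * G"
    using stop_loss_convex[OF assms(1-4)] nonneg by (intro ereal_mult_right_mono) (simp_all add: E_def E1_def E2_def)
  also have "\<dots> = (ereal t * ereal E1 + ereal (1 - t) * ereal E2) * G"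
    by simp
  also have "\<dots> = ereal t * (ereal E1 * G) + ereal (1 - t) * (ereal E2 * G)"
    using nonneg assms(3,4) by (subst ereal_left_distrib) (simp_all only: mult.assoc, auto)
  finally have "ereal (t * a1 + (1 - t) * a2) + ereal E * G
      \<le> ereal (t * a1 + (1 - t) * a2) + (ereal t * (ereal E1 * G) + ereal (1 - t) * (ereal E2 * G))"
    by (rule add_left_mono)
  also have "\<dots> = ereal t * (ereal a1 + ereal E1 * G) + ereal (1 - t) * (ereal a2 + ereal E2 * G)"
    using nonneg assms(3,4) by (intro ereal_convex_comb_add) auto
  finally have "max (ereal (t * a1 + (1 - t) * a2) + ereal E * G) (ereal (t * x1 + (1 - t) * x2))
      \<le> max (ereal t * (ereal a1 + ereal E1 * G) + ereal (1 - t) * (ereal a2 + ereal E2 * G))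
          (ereal t * ereal x1 + ereal (1 - t) * ereal x2)"
    by (intro max.mono) simp_all
  also have "\<dots> \<le> ereal t * max (ereal a1 + ereal E1 * G) (ereal x1)
      + ereal (1 - t) * max (ereal a2 + ereal E2 * G) (ereal x2)"
    using assms(3,4) by (rule ereal_convex_comb_max)
  finally have bound: "max (ereal (t * a1 + (1 - t) * a2) + ereal E * G) (ereal (t * x1 + (1 - t) * x2))
      \<le> ereal t * max (ereal a1 + ereal E1 * G) (ereal x1)
        + ereal (1 - t) * max (ereal a2 + ereal E2 * G) (ereal x2)" .
  have "inv_one_minus \<Lambda> (t * x1 + (1 - t) * x2) = G" "inv_one_minus \<Lambda> x2 = G" "inv_one_minus \<Lambda> x1 = G"
    using assms(5,6) by (simp_all add: G_def inv_one_minus_def)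
  then show ?thesis
    unfolding T_Lambda_eq_max E_def[symmetric] E1_def[symmetric] E2_def[symmetric] using bound by simp
qed

lemma T_Lambda_convex_in_a_X:
  assumes "X1 \<in> Linf M" "X2 \<in> Linf M" "0 < t" "t < 1"
  shows "T_Lambda M \<Lambda> (t * a1 + (1 - t) * a2) x (\<lambda>\<omega>. t * X1 \<omega> + (1 - t) * X2 \<omega>)
    \<le> ereal t * T_Lambda M \<Lambda> a1 x X1 + ereal (1 - t) * T_Lambda M \<Lambda> a2 x X2"
proof -
  have "t * x + (1 - t) * x = x"
    by (simp add: algebra_simps)
  then show ?thesis
    using T_Lambda_convex_on_level_set[of X1 X2 t \<Lambda> x x a1 a2] assms by simp
qed

lemma inv_one_minus_convex_if_T_Lambda_convex_in_x:
  assumes "\<And>a X. X \<in> Linf M \<Longrightarrow> ereal_convex (\<lambda>x. T_Lambda M \<Lambda> a x X)"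
  shows "ereal_convex (inv_one_minus \<Lambda>)"
  unfolding ereal_convex_def
proof (intro allI impI)
  fix x y t :: real assume t: "0 < t \<and> t < 1"
  define a where "a = max x y"
  let ?g = "inv_one_minus \<Lambda>" and ?X = "\<lambda>_. a + 1"
  have T_const: "T_Lambda M \<Lambda> a z ?X = max (ereal a + ?g z) (ereal z)" for z
    by (simp add: T_Lambda_const)
  have T_below: "T_Lambda M \<Lambda> a z ?X = ereal a + ?g z" if "z \<le> a" for z
  proof -
    have "ereal z \<le> ereal a + ?g z"
      using that inv_one_minus_nonneg[of \<Lambda> z] by (simp add: add_increasing2)
    then show ?thesis by (simp add: T_const)
  qed
  have "t * a + (1 - t) * a = a"
    by (simp add: algebra_simps)
  then have "ereal a + ?g (t * x + (1 - t) * y) \<le> T_Lambda M \<Lambda> a (t * x + (1 - t) * y) ?X"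
    by (simp add: T_const)
  also have "\<dots> \<le> ereal t * T_Lambda M \<Lambda> a x ?X + ereal (1 - t) * T_Lambda M \<Lambda> a y ?X"
    using assms[OF const_in_Linf] t unfolding ereal_convex_def by blast
  also have "\<dots> = ereal t * (ereal a + ?g x) + ereal (1 - t) * (ereal a + ?g y)"
    using T_below[of x] T_below[of y] by (simp add: a_def)
  also have "\<dots> = ereal a + (ereal t * ?g x + ereal (1 - t) * ?g y)"
    using ereal_convex_comb_add[of "?g x" "?g y" t a a] \<open>t * a + (1 - t) * a = a\<close> t
    by (simp add: inv_one_minus_nonneg)
  finally show "?g (t * x + (1 - t) * y) \<le> ereal t * ?g x + ereal (1 - t) * ?g y"
    by (simp add: ereal_add_le_add_iff)
qed

end

definition T_Lambda_convex_a_x :: "'a measure \<Rightarrow> (real \<Rightarrow> real) \<Rightarrow> bool" where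
  "T_Lambda_convex_a_x M \<Lambda> \<longleftrightarrow> (\<forall>X\<in>Linf M. \<forall>a1 a2 x1 x2 t. 0 < t \<and> t < 1 \<longrightarrow>
     T_Lambda M \<Lambda> (t * a1 + (1 - t) * a2) (t * x1 + (1 - t) * x2) X
       \<le> ereal t * T_Lambda M \<Lambda> a1 x1 X + ereal (1 - t) * T_Lambda M \<Lambda> a2 x2 X)"

definition T_Lambda_quasiconvex_a_x :: "'a measure \<Rightarrow> (real \<Rightarrow> real) \<Rightarrow> bool" where
  "T_Lambda_quasiconvex_a_x M \<Lambda> \<longleftrightarrow> (\<forall>X\<in>Linf M. \<forall>a1 a2 x1 x2 t. 0 < t \<and> t < 1 \<longrightarrow>
     T_Lambda M \<Lambda> (t * a1 + (1 - t) * a2) (t * x1 + (1 - t) * x2) X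
       \<le> max (T_Lambda M \<Lambda> a1 x1 X) (T_Lambda M \<Lambda> a2 x2 X))"

definition T_Lambda_convex_a_x_X :: "'a measure \<Rightarrow> (real \<Rightarrow> real) \<Rightarrow> bool" where
  "T_Lambda_convex_a_x_X M \<Lambda> \<longleftrightarrow> (\<forall>X1\<in>Linf M. \<forall>X2\<in>Linf M. \<forall>a1 a2 x1 x2 t. 0 < t \<and> t < 1 \<longrightarrow>
     T_Lambda M \<Lambda> (t * a1 + (1 - t) * a2) (t * x1 + (1 - t) * x2) (\<lambda>\<omega>. t * X1 \<omega> + (1 - t) * X2 \<omega>)
       \<le> ereal t * T_Lambda M \<Lambda> a1 x1 X1 + ereal (1 - t) * T_Lambda M \<Lambda> a2 x2 X2)"

definition T_Lambda_quasiconvex_a_x_X :: "'a measure \<Rightarrow> (real \<Rightarrow> real) \<Rightarrow> bool" where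
  "T_Lambda_quasiconvex_a_x_X M \<Lambda> \<longleftrightarrow> (\<forall>X1\<in>Linf M. \<forall>X2\<in>Linf M. \<forall>a1 a2 x1 x2 t. 0 < t \<and> t < 1 \<longrightarrow>
     T_Lambda M \<Lambda> (t * a1 + (1 - t) * a2) (t * x1 + (1 - t) * x2) (\<lambda>\<omega>. t * X1 \<omega> + (1 - t) * X2 \<omega>)
       \<le> max (T_Lambda M \<Lambda> a1 x1 X1) (T_Lambda M \<Lambda> a2 x2 X2))"

lemma convex_comb_self: "(\<lambda>\<omega>. t * X \<omega> + (1 - t) * X \<omega>) = (X :: 'a \<Rightarrow> real)"
  by (simp add: algebra_simps)

lemma T_Lambda_convex_a_x_if_a_x_X:
  assumes "T_Lambda_convex_a_x_X M \<Lambda>"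
  shows "T_Lambda_convex_a_x M \<Lambda>"
  unfolding T_Lambda_convex_a_x_def
proof (intro ballI allI impI)
  fix X a1 a2 x1 x2 and t :: real
  assume "X \<in> Linf M" "0 < t \<and> t < 1"
  then show "T_Lambda M \<Lambda> (t * a1 + (1 - t) * a2) (t * x1 + (1 - t) * x2) X \<le> ereal t * T_Lambda M \<Lambda> a1 x1 X + ereal (1 - t) * T_Lambda M \<Lambda> a2 x2 X"
    using assms[unfolded T_Lambda_convex_a_x_X_def, rule_format, of X X t a1 a2 x1 x2]
    by (simp only: convex_comb_self)
qed

lemma T_Lambda_quasiconvex_a_x_if_a_x_X:
  assumes "T_Lambda_quasiconvex_a_x_X M \<Lambda>"
  shows "T_Lambda_quasiconvex_a_x M \<Lambda>"
  unfolding T_Lambda_quasiconvex_a_x_def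
proof (intro ballI allI impI)
  fix X a1 a2 x1 x2 and t :: real
  assume "X \<in> Linf M" "0 < t \<and> t < 1"
  then show "T_Lambda M \<Lambda> (t * a1 + (1 - t) * a2) (t * x1 + (1 - t) * x2) X \<le> max (T_Lambda M \<Lambda> a1 x1 X) (T_Lambda M \<Lambda> a2 x2 X)"
    using assms[unfolded T_Lambda_quasiconvex_a_x_X_def, rule_format, of X X t a1 a2 x1 x2]
    by (simp only: convex_comb_self)
qed

lemma T_Lambda_quasiconvex_a_x_if_convex: "T_Lambda_convex_a_x M \<Lambda> \<Longrightarrow> T_Lambda_quasiconvex_a_x M \<Lambda>"
  unfolding T_Lambda_convex_a_x_def T_Lambda_quasiconvex_a_x_def
  by (meson ereal_convex_comb_le_max less_imp_le order_trans)

lemma T_Lambda_quasiconvex_a_x_X_if_convex: "T_Lambda_convex_a_x_X M \<Lambda> \<Longrightarrow> T_Lambda_quasiconvex_a_x_X M \<Lambda>"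
  unfolding T_Lambda_convex_a_x_X_def T_Lambda_quasiconvex_a_x_X_def
  by (meson ereal_convex_comb_le_max less_imp_le order_trans)

context prob_space
begin

lemma T_Lambda_convex_a_x_X_if_Lambda_const:
  "\<exists>c. \<forall>x. \<Lambda> x = c \<Longrightarrow> T_Lambda_convex_a_x_X M \<Lambda>"
  unfolding T_Lambda_convex_a_x_X_def by (auto intro!: T_Lambda_convex_on_level_set)

text \<open>For the constant \<open>X = q\<close>, mix \<open>(a, x) = (q, z)\<close> and \<open>(q - 1, q)\<close> with a small weight
  \<open>s\<close> on the first, chosen so that the mixture lands at \<open>x = p\<close>: as \<open>1/(1 - \<Lambda>)\<close> is larger at
  \<open>p\<close> than at \<open>q\<close>, the value there exceeds both endpoint values.\<close>

lemma Lambda_const_if_T_Lambda_quasiconvex_a_x: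
  assumes range: "\<And>x. 0 \<le> \<Lambda> x \<and> \<Lambda> x \<le> 1" and antimono: "antimono \<Lambda>"
    and quasiconvex: "T_Lambda_quasiconvex_a_x M \<Lambda>"
  shows "\<exists>c. \<forall>x. \<Lambda> x = c"
proof (rule ccontr)
  assume "\<not> ?thesis"
  with antimono obtain p q where pq: "p < q" "\<Lambda> q < \<Lambda> p"
    by (rule strict_descent_if_not_constant)
  let ?g = "inv_one_minus \<Lambda>" and ?X = "\<lambda>_. q"
  define v where "v = 1 / (1 - \<Lambda> q)"
  have gq: "?g q = ereal v" "1 \<le> v"
    using pq range[of q] range[of p] by (simp_all add: inv_one_minus_def v_def)
  have "ereal v < ?g p"
    using pq range[of p] range[of q] by (auto simp: inv_one_minus_def v_def frac_less2)
  then obtain s where s: "0 < s" "s < 1" and gain: "ereal v < ereal s + ereal (1 - s) * ?g p"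
    using exists_weight_above gq(2) by blast
  define z where "z = p - (1 - s) * (q - p) / s"
  have zp: "s * z + (1 - s) * q = p"
    using s by (simp add: z_def field_simps)
  have "z \<le> p"
    using s pq by (simp add: z_def)
  have "T_Lambda M \<Lambda> (s * q + (1 - s) * (q - 1)) (s * z + (1 - s) * q) ?X
      \<le> max (T_Lambda M \<Lambda> q z ?X) (T_Lambda M \<Lambda> (q - 1) q ?X)"
    using quasiconvex const_in_Linf s unfolding T_Lambda_quasiconvex_a_x_def by blast
  also have "T_Lambda M \<Lambda> q z ?X = ereal q"
    using \<open>z \<le> p\<close> pq by (simp add: T_Lambda_const zero_ereal_def[symmetric])
  also have "T_Lambda M \<Lambda> (q - 1) q ?X = ereal (q - 1) + ereal v"
    using gq by (simp add: T_Lambda_const)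
  also have "max (ereal q) (ereal (q - 1) + ereal v) = ereal (q - 1) + ereal v"
    using gq by simp
  also have "ereal (q - 1) + ereal v < ereal (q - 1) + (ereal s + ereal (1 - s) * ?g p)"
    using gain by (intro ereal_less_add) auto
  also have "\<dots> = ereal (q - 1 + s) + ereal (1 - s) * ?g p"
    by (simp only: add.assoc[symmetric] plus_ereal.simps)
  also have "\<dots> \<le> T_Lambda M \<Lambda> (s * q + (1 - s) * (q - 1)) (s * z + (1 - s) * q) ?X"
  proof -
    have "s * q + (1 - s) * (q - 1) = q - 1 + s"
      by (simp add: algebra_simps)
    then show ?thesis
      using s unfolding zp by (simp add: T_Lambda_const)
  qed
  finally show False by simp
qed

lemma T_Lambda_convexity_iff_Lambda_const:
  assumes "\<And>x. 0 \<le> \<Lambda> x \<and> \<Lambda> x \<le> 1" "antimono \<Lambda>"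
  shows "(T_Lambda_convex_a_x M \<Lambda> \<longleftrightarrow> (\<exists>c. \<forall>x. \<Lambda> x = c))
    \<and> (T_Lambda_quasiconvex_a_x M \<Lambda> \<longleftrightarrow> (\<exists>c. \<forall>x. \<Lambda> x = c))
    \<and> (T_Lambda_convex_a_x_X M \<Lambda> \<longleftrightarrow> (\<exists>c. \<forall>x. \<Lambda> x = c))
    \<and> (T_Lambda_quasiconvex_a_x_X M \<Lambda> \<longleftrightarrow> (\<exists>c. \<forall>x. \<Lambda> x = c))"
  using Lambda_const_if_T_Lambda_quasiconvex_a_x[OF assms] T_Lambda_convex_a_x_X_if_Lambda_const[of \<Lambda>]
    T_Lambda_convex_a_x_if_a_x_X[of M \<Lambda>] T_Lambda_quasiconvex_a_x_if_a_x_X[of M \<Lambda>]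
    T_Lambda_quasiconvex_a_x_if_convex[of M \<Lambda>] T_Lambda_quasiconvex_a_x_X_if_convex[of M \<Lambda>]
  by blast

end

theorem theorem4:
  fixes M :: "'a measure" and \<Lambda> :: "real \<Rightarrow> real"
  assumes P: "prob_space M"
    and atomless: "atomless M"
    and range: "\<And>x. 0 \<le> \<Lambda> x \<and> \<Lambda> x \<le> 1"
    and decr: "antimono \<Lambda>"
    and rcont: "\<And>x. continuous (at_right x) \<Lambda>"
  shows
    \<comment> \<open>minimisation formula and minimisers\<close>
    "(\<forall>X\<in>Linf M.
        (\<forall>a x. ereal (ES_Lambda M \<Lambda> X) \<le> T_Lambda M \<Lambda> a x X)
      \<and> (\<exists>a x. T_Lambda M \<Lambda> a x X = ereal (ES_Lambda M \<Lambda> X))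
      \<and> (\<Lambda> (ES_Lambda M \<Lambda> X) < 1 \<longrightarrow>
           (\<forall>a. VaR M X (\<Lambda> (ES_Lambda M \<Lambda> X)) \<le> ereal a
                \<and> ereal a \<le> VaRp M X (\<Lambda> (ES_Lambda M \<Lambda> X)) \<longrightarrow>
                T_Lambda M \<Lambda> a (ES_Lambda M \<Lambda> X) X = ereal (ES_Lambda M \<Lambda> X)))
      \<and> (\<Lambda> (ES_Lambda M \<Lambda> X) = 1 \<longrightarrow>
           T_Lambda M \<Lambda> (real_of_ereal (VaR M X 1)) (ES_Lambda M \<Lambda> X) X
             = ereal (ES_Lambda M \<Lambda> X)))
   \<and>
    \<comment> \<open>(i) joint convexity in (a,X) for every x\<close>
    (\<forall>x a1 a2 X1 X2 t. X1 \<in> Linf M \<and> X2 \<in> Linf M \<and> 0 < t \<and> t < 1 \<longrightarrow>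
        T_Lambda M \<Lambda> (t * a1 + (1 - t) * a2) x (\<lambda>\<omega>. t * X1 \<omega> + (1 - t) * X2 \<omega>)
          \<le> ereal t * T_Lambda M \<Lambda> a1 x X1 + ereal (1 - t) * T_Lambda M \<Lambda> a2 x X2)
   \<and>
    \<comment> \<open>(ii) convexity in x iff 1/(1-\<Lambda>) convex\<close>
    ((\<forall>a. \<forall>X\<in>Linf M. ereal_convex (\<lambda>x. T_Lambda M \<Lambda> a x X))
       \<longleftrightarrow> ereal_convex (inv_one_minus \<Lambda>))
   \<and>
    \<comment> \<open>(iii) (a),(b),(c),(d) are each equivalent to (e)\<close>
    (let
       ca = (\<forall>X\<in>Linf M. \<forall>a1 a2 x1 x2 t. 0 < t \<and> t < 1 \<longrightarrow>
               T_Lambda M \<Lambda> (t * a1 + (1 - t) * a2) (t * x1 + (1 - t) * x2) X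
                 \<le> ereal t * T_Lambda M \<Lambda> a1 x1 X + ereal (1 - t) * T_Lambda M \<Lambda> a2 x2 X);
       cb = (\<forall>X\<in>Linf M. \<forall>a1 a2 x1 x2 t. 0 < t \<and> t < 1 \<longrightarrow>
               T_Lambda M \<Lambda> (t * a1 + (1 - t) * a2) (t * x1 + (1 - t) * x2) X
                 \<le> max (T_Lambda M \<Lambda> a1 x1 X) (T_Lambda M \<Lambda> a2 x2 X));
       cc = (\<forall>X1\<in>Linf M. \<forall>X2\<in>Linf M. \<forall>a1 a2 x1 x2 t. 0 < t \<and> t < 1 \<longrightarrow>
               T_Lambda M \<Lambda> (t * a1 + (1 - t) * a2) (t * x1 + (1 - t) * x2)
                   (\<lambda>\<omega>. t * X1 \<omega> + (1 - t) * X2 \<omega>)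
                 \<le> ereal t * T_Lambda M \<Lambda> a1 x1 X1 + ereal (1 - t) * T_Lambda M \<Lambda> a2 x2 X2);
       cd = (\<forall>X1\<in>Linf M. \<forall>X2\<in>Linf M. \<forall>a1 a2 x1 x2 t. 0 < t \<and> t < 1 \<longrightarrow>
               T_Lambda M \<Lambda> (t * a1 + (1 - t) * a2) (t * x1 + (1 - t) * x2)
                   (\<lambda>\<omega>. t * X1 \<omega> + (1 - t) * X2 \<omega>)
                 \<le> max (T_Lambda M \<Lambda> a1 x1 X1) (T_Lambda M \<Lambda> a2 x2 X2));
       ce = (\<exists>c. \<forall>x. \<Lambda> x = c)
     in (ca \<longleftrightarrow> ce) \<and> (cb \<longleftrightarrow> ce) \<and> (cc \<longleftrightarrow> ce) \<and> (cd \<longleftrightarrow> ce))"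
proof -
  interpret prob_space M by (rule P)
  have convex_in_x: "(\<forall>a. \<forall>X\<in>Linf M. ereal_convex (\<lambda>x. T_Lambda M \<Lambda> a x X))
      \<longleftrightarrow> ereal_convex (inv_one_minus \<Lambda>)"
    using T_Lambda_convex_in_x_if_inv_one_minus_convex inv_one_minus_convex_if_T_Lambda_convex_in_x by blast
  show ?thesis
    unfolding Let_def T_Lambda_convex_a_x_def[symmetric] T_Lambda_quasiconvex_a_x_def[symmetric]
      T_Lambda_convex_a_x_X_def[symmetric] T_Lambda_quasiconvex_a_x_X_def[symmetric]
    using ES_Lambda_minimisation[OF P range decr rcont] T_Lambda_convex_in_a_X convex_in_x
      T_Lambda_convexity_iff_Lambda_const[OF range decr]
    by blast
qed

end
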